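(* Let $I$ be a set and $\mathbb K$ a commutative ring. The map sending a weighted troupe $\boldsymbol{\tau}\colon\mathsf{BPT}(I)\to\mathbb K$ to its restriction $\boldsymbol{\tau}|_{\mathsf{Branch}(I)}$ is a bijection from the set of weighted troupes to the set of all functions $\mathsf{Branch}(I)\to\mathbb K$.
   Context: A binary plane tree is a rooted tree in which each child of a vertex is designated as a left child or a right child, and no vertex has more than one left child or more than one right child; trees are considered up to isomorphism, and the empty tree $\varnothing$ is allowed. A branch is a nonempty binary plane tree in which every vertex has at most one child. Let $\boxminus$ be a special symbol not a vertex of any tree. An $I$-coloring of a binary plane tree $T$ is a function $\chi\colon T\sqcup\{\boxminus\}\to I$. $\mathsf{BPT}(I)$ denotes the set of $I$-colored binary plane trees (including the empty tree) and $\mathsf{Branch}(I)$ the set of $I$-colored branches. Insertion: for nonempty $I$-colored trees $T_1,T_2$ with colorings $\chi_1,\chi_2$ and a vertex $v$ of $T_1$, the tree $\nabla_v(T_1,T_2)$ is formed by creating a new vertex $v^*$ that takes the place of $v$ in $T_1$ (attached to $v$'s former parent on the same side), making $v$ (with its subtrees) the left child of $v^*$, and attaching $T_2$ as the right subtree of $v^*$; its coloring is $\chi_1$ on $T_1\sqcup\{\boxminus\}$, $\chi_2$ on the vertices of $T_2$, and $v^*$ gets color $\chi_2(\boxminus)$. A weighted troupe is a function $\boldsymbol{\tau}\colon\mathsf{BPT}(I)\to\mathbb K$ such that $\boldsymbol{\tau}(\varnothing)=0$ and $\boldsymbol{\tau}(\nabla_v(T_1,T_2))=\boldsymbol{\tau}(T_1)\boldsymbol{\tau}(T_2)$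 for all nonempty $T_1,T_2\in\mathsf{BPT}(I)$ and all vertices $v$ of $T_1$. *)

theory Defs
  imports "HOL-Library.FuncSet"
begin

text \<open>Binary plane trees with vertex colours in 'i (up to isomorphism = as a datatype).
  Leaf is the empty tree; Node l a r is a vertex coloured a with left subtree l and right subtree r.\<close>
datatype 'i bt = Leaf | Node "'i bt" 'i "'i bt"

text \<open>An 'i-coloured binary plane tree: a tree with vertex colours, paired with the colour
  of the special symbol boxminus.\<close>
type_synonym 'i cbpt = "'i bt \<times> 'i"

text \<open>Vertices are addressed by paths from the root (False = go to left child, True = right).\<close>
fun is_vertex :: "'i bt \<Rightarrow> bool list \<Rightarrow> bool" where
  "is_vertex Leaf p = False"
| "is_vertex (Node l a r) [] = True"
| "is_vertex (Node l a r) (False # p) = is_vertex l p"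
| "is_vertex (Node l a r) (True # p) = is_vertex r p"

text \<open>graft T1 v c T2: the new vertex v* (coloured c) replaces the vertex at v,
  the old subtree at v becomes its left subtree and T2 its right subtree.\<close>
fun graft :: "'i bt \<Rightarrow> bool list \<Rightarrow> 'i \<Rightarrow> 'i bt \<Rightarrow> 'i bt" where
  "graft Leaf p c t2 = Leaf"
| "graft (Node l a r) [] c t2 = Node (Node l a r) c t2"
| "graft (Node l a r) (False # p) c t2 = Node (graft l p c t2) a r"
| "graft (Node l a r) (True # p) c t2 = Node l a (graft r p c t2)"

text \<open>Insertion nabla_v(T1,T2) on coloured trees: boxminus keeps the colour from T1,
  v* gets the boxminus colour of T2.\<close>
definition nabla :: "bool list \<Rightarrow> 'i cbpt \<Rightarrow> 'i cbpt \<Rightarrow> 'i cbpt" where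
  "nabla v T1 T2 = (graft (fst T1) v (snd T2) (fst T2), snd T1)"

fun is_branch :: "'i bt \<Rightarrow> bool" where
  "is_branch Leaf = False"
| "is_branch (Node l a r) =
     ((l = Leaf \<and> r = Leaf) \<or> (l = Leaf \<and> is_branch r) \<or> (r = Leaf \<and> is_branch l))"

definition Branch :: "'i cbpt set" where
  "Branch = {T. is_branch (fst T)}"

definition weighted_troupe :: "('i cbpt \<Rightarrow> 'k::comm_ring_1) \<Rightarrow> bool" where
  "weighted_troupe \<tau> \<longleftrightarrow>
     (\<forall>c. \<tau> (Leaf, c) = 0) \<and>
     (\<forall>T1 T2 v. fst T1 \<noteq> Leaf \<longrightarrow> fst T2 \<noteq> Leaf \<longrightarrow> is_vertex (fst T1) v \<longrightarrow>
        \<tau> (nabla v T1 T2) = \<tau> T1 * \<tau> T2)"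

end

theory Submission
  imports Defs
begin

text \<open>A vertex with two children can only be the new vertex v* of an insertion, and
  every nonempty tree that is not a branch is an insertion \<nabla>_v(T1, T2) of strictly smaller
  trees. Hence a weighted troupe is determined by its values on branches.
  Conversely, let the trunk of a tree be the branch obtained by contracting every vertex
  with two children together with its right subtree. Given f on branches, set
  \<tau>(T) = f(trunk T, \<chi>(\<boxminus>)) \<cdot> \<Prod> f(trunk r, \<chi>(v)), the product ranging over the vertices v
  with two children, r being the right subtree of v. An insertion leaves the trunk of T1
  unchanged and contributes exactly the factors of T2, with \<chi>2(\<boxminus>) as the colour of v*,
  so \<tau> is a weighted troupe extending f.\<close>

fun trunk :: "'i bt \<Rightarrow> 'i bt" where
  "trunk Leaf = Leaf"
| "trunk (Node l a r) =
     (if l = Leaf then Node Leaf a (trunk r)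
      else if r = Leaf then Node (trunk l) a Leaf else trunk l)"

fun side_weight :: "('i cbpt \<Rightarrow> 'k::comm_ring_1) \<Rightarrow> 'i bt \<Rightarrow> 'k" where
  "side_weight f Leaf = 1"
| "side_weight f (Node l a r) = side_weight f l * side_weight f r *
     (if l \<noteq> Leaf \<and> r \<noteq> Leaf then f (trunk r, a) else 1)"

definition troupe_extension :: "('i cbpt \<Rightarrow> 'k::comm_ring_1) \<Rightarrow> 'i cbpt \<Rightarrow> 'k" where
  "troupe_extension f T =
     (if fst T = Leaf then 0 else f (trunk (fst T), snd T) * side_weight f (fst T))"

lemma is_vertex_neq_Leaf: "is_vertex t v \<Longrightarrow> t \<noteq> Leaf"
  by (cases t) auto

lemma is_branch_neq_Leaf: "is_branch t \<Longrightarrow> t \<noteq> Leaf"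
  by (cases t) auto

lemma graft_neq_Leaf: "is_vertex t v \<Longrightarrow> graft t v c t2 \<noteq> Leaf"
  by (induction t v c t2 rule: graft.induct) auto

lemma size_graft: "is_vertex t v \<Longrightarrow> size (graft t v c t2) = size t + size t2 + 1"
  by (induction t v c t2 rule: graft.induct) auto

lemma trunk_graft: "is_vertex t v \<Longrightarrow> t2 \<noteq> Leaf \<Longrightarrow> trunk (graft t v c t2) = trunk t"
  by (induction t v c t2 rule: graft.induct) (auto dest: is_vertex_neq_Leaf graft_neq_Leaf)

lemma side_weight_graft:
  "is_vertex t v \<Longrightarrow> t2 \<noteq> Leaf \<Longrightarrow>
   side_weight f (graft t v c t2) = side_weight f t * side_weight f t2 * f (trunk t2, c)"
  by (induction t v c t2 rule: graft.induct)
     (auto simp: algebra_simps trunk_graft dest: is_vertex_neq_Leaf graft_neq_Leaf)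

lemma trunk_branch: "is_branch t \<Longrightarrow> trunk t = t"
  by (induction t) auto

lemma side_weight_branch: "is_branch t \<Longrightarrow> side_weight f t = 1"
  by (induction t) auto

lemma troupe_extension_branch:
  "T \<in> Branch \<Longrightarrow> troupe_extension f T = f T"
  by (simp add: Branch_def troupe_extension_def trunk_branch side_weight_branch is_branch_neq_Leaf)

lemma weighted_troupe_troupe_extension:
  fixes f :: "'i cbpt \<Rightarrow> 'k::comm_ring_1"
  shows "weighted_troupe (troupe_extension f)"
  unfolding weighted_troupe_def
proof (intro conjI allI impI)
  fix T1 T2 :: "'i cbpt" and v
  assume "fst T1 \<noteq> Leaf" "fst T2 \<noteq> Leaf" "is_vertex (fst T1) v"
  then show "troupe_extension f (nabla v T1 T2) = troupe_extension f T1 * troupe_extension f T2"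
    by (simp add: nabla_def troupe_extension_def graft_neq_Leaf trunk_graft side_weight_graft
        algebra_simps)
qed (simp add: troupe_extension_def)

lemma graft_decomposition:
  assumes "t \<noteq> Leaf" "\<not> is_branch t"
  shows "\<exists>t1 v c t2. is_vertex t1 v \<and> t2 \<noteq> Leaf \<and> t = graft t1 v c t2"
  using assms
proof (induction t)
  case (Node l a r)
  consider "l = Leaf" | "l \<noteq> Leaf" "r = Leaf" | "l \<noteq> Leaf" "r \<noteq> Leaf" by blast
  then show ?case
  proof cases
    case 1
    with Node obtain t1 v c t2 where "is_vertex t1 v" "t2 \<noteq> Leaf" "r = graft t1 v c t2"
      by auto
    with 1 show ?thesis
      by (intro exI[of _ "Node Leaf a t1"] exI[of _ "True # v"]) auto
  next
    case 2
    with Node obtain t1 v c t2 where "is_vertex t1 v" "t2 \<noteq> Leaf" "l = graft t1 v c t2"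
      by auto
    with 2 show ?thesis
      by (intro exI[of _ "Node t1 a Leaf"] exI[of _ "False # v"]) auto
  next
    case 3
    then obtain l1 b l2 where "l = Node l1 b l2" by (cases l) auto
    with 3 show ?thesis
      by (intro exI[of _ l] exI[of _ "[]"]) auto
  qed
qed simp

lemma weighted_troupe_eqI:
  assumes "weighted_troupe \<sigma>" "weighted_troupe \<tau>" "\<And>T. T \<in> Branch \<Longrightarrow> \<sigma> T = \<tau> T"
  shows "\<sigma> T = \<tau> T"
proof (induction "fst T" arbitrary: T rule: measure_induct_rule[of size])
  case (less T)
  obtain t c where T: "T = (t, c)" by fastforce
  consider "t = Leaf" | "T \<in> Branch" | "t \<noteq> Leaf" "\<not> is_branch t"
    by (auto simp: T Branch_def)
  then show ?case
  proof cases
    case 1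
    with assms(1,2) show ?thesis by (simp add: T weighted_troupe_def)
  next
    case 2
    with assms(3) show ?thesis .
  next
    case 3
    then obtain t1 v c' t2 where t: "is_vertex t1 v" "t2 \<noteq> Leaf" "t = graft t1 v c' t2"
      using graft_decomposition by blast
    then have T_nabla: "T = nabla v (t1, c) (t2, c')"
      by (simp add: T nabla_def)
    have "size t1 < size t" "size t2 < size t"
      using t by (simp_all add: size_graft)
    then have "\<sigma> (t1, c) = \<tau> (t1, c)" "\<sigma> (t2, c') = \<tau> (t2, c')"
      by (auto intro: less simp: T)
    with assms(1,2) t show ?thesis
      unfolding T_nabla weighted_troupe_def by (simp add: is_vertex_neq_Leaf)
  qed
qed

theorem proposition3p2:
  shows "bij_betw (\<lambda>\<tau>. restrict \<tau> Branch)
           {\<tau> :: 'i cbpt \<Rightarrow> 'k::comm_ring_1. weighted_troupe \<tau>}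
           ((Branch :: 'i cbpt set) \<rightarrow>\<^sub>E (UNIV :: 'k set))"
proof (rule bij_betwI[where g = troupe_extension])
  show "(\<lambda>\<tau>. restrict \<tau> Branch) \<in> {\<tau> :: 'i cbpt \<Rightarrow> 'k. weighted_troupe \<tau>} \<rightarrow> Branch \<rightarrow>\<^sub>E UNIV"
    by auto
  show "troupe_extension \<in>
      ((Branch :: 'i cbpt set) \<rightarrow>\<^sub>E (UNIV :: 'k set)) \<rightarrow> Collect weighted_troupe"
    using weighted_troupe_troupe_extension by blast
  show "troupe_extension (restrict \<tau> Branch) = \<tau>"
    if "\<tau> \<in> Collect weighted_troupe" for \<tau> :: "'i cbpt \<Rightarrow> 'k"
  proof
    fix T
    show "troupe_extension (restrict \<tau> Branch) T = \<tau> T"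
      using that
      by (auto intro: weighted_troupe_eqI[OF weighted_troupe_troupe_extension]
          simp: troupe_extension_branch)
  qed
  show "restrict (troupe_extension f) Branch = f"
    if "f \<in> (Branch :: 'i cbpt set) \<rightarrow>\<^sub>E (UNIV :: 'k set)" for f
    using that by (auto simp: troupe_extension_branch PiE_iff extensional_def)
qed

end
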